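(* For all smooth functions $\varrho,a^1,a^2,a^3$ on $\mathbb{R}^5$, $$\sum_{i_1,\dots,i_5,j_1,\dots,j_5=1}^{5}\varepsilon^{i_1i_2i_3i_4i_5}\varepsilon^{j_1j_2j_3j_4j_5}\,\frac{\partial\varrho}{\partial x^{i_1}}\,\frac{\partial\varrho}{\partial x^{i_2}}\,\frac{\partial^2a^1}{\partial x^{i_3}\partial x^{j_1}}\,\frac{\partial a^1}{\partial x^{j_2}}\,\frac{\partial^2a^2}{\partial x^{i_4}\partial x^{j_3}}\,\frac{\partial a^2}{\partial x^{j_4}}\,\frac{\partial a^3}{\partial x^{i_5}}\,\frac{\partial a^3}{\partial x^{j_5}}=0.$$ This is the formula of the embedding into dimension 5 of the 4D Nambu micro-graph Hamiltonian $H^{(9)}_{d=4}=[1,2,3,5;\ 3,4,5,6]$. That micro-graph has: - Levi-Civita vertices $1,2$ carrying $\varrho\,\varepsilon$; - Casimir vertices $3,4$ carrying $a^1$ and $5,6$ carrying $a^2$, where vertex $2+\ell$ carries $a^1$ of vertex $\ell$ and vertex $4+\ell$ carries $a^2$ of vertex $\ell$. Its embedding is $[1,2,3,5,7;\ 3,4,5,6,8]$, with the new Casimir $a^3$ at vertices $7,8$.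
   Context: $\varepsilon^{i_1\dots i_5}$ denotes the Levi-Civita symbol in dimension 5, and $x^1,\dots,x^5$ are the coordinates on $\mathbb{R}^5$. In the encoding $[\,\cdot\,;\,\cdot\,]$, the $\ell$-th tuple lists the target vertices of the ordered edges issued from Levi-Civita vertex $\ell$. Each edge with summation index $i$ applies $\partial/\partial x^i$ to the content of its target vertex. The embedding from dimension $d$ to $d+1$ is defined as follows: - each Levi-Civita vertex gets one extra, last, edge to a new terminal vertex carrying a new Casimir $a^{d-1}$; - all other edges are kept unchanged. *)

theory Defs
  imports "HOL-Analysis.Analysis"
begin

definition partial :: "'n::finite \<Rightarrow> (real^'n \<Rightarrow> real) \<Rightarrow> real^'n \<Rightarrow> real" where
  "partial i f x = frechet_derivative f (at x) (axis i 1)"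

fun Ck :: "nat \<Rightarrow> (real^'n::finite \<Rightarrow> real) \<Rightarrow> bool" where
  "Ck 0 f = continuous_on UNIV f"
| "Ck (Suc k) f = (f differentiable_on UNIV \<and> (\<forall>i. Ck k (partial i f)))"

definition smooth :: "(real^'n::finite \<Rightarrow> real) \<Rightarrow> bool" where
  "smooth f = (\<forall>k. Ck k f)"

definition levi_civita :: "'a::{finite,linorder} list \<Rightarrow> real" where
  "levi_civita xs = (if distinct xs \<and> set xs = UNIV
     then (-1) ^ card {(p,q). p < q \<and> q < length xs \<and> xs ! q < xs ! p} else 0)"

end

theory Submission
  imports Defs
begin

text \<open>The first Levi-Civita factor is antisymmetric in \<open>(i\<^sub>1, i\<^sub>2)\<close>, while
  \<open>\<partial>\<^sub>i\<^sub>1\<rho> \<partial>\<^sub>i\<^sub>2\<rho>\<close> is symmetric and no other factor involves this pair, so the sum over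
  \<open>(i\<^sub>1, i\<^sub>2)\<close> cancels. Antisymmetry of the symbol under swapping its first two entries
  holds because the transposition of the first two positions maps the inversions of one list
  bijectively onto those of the other, except for \<open>(0, 1)\<close>, which is an inversion of
  exactly one of them.\<close>

definition inversions :: "'a::linorder list \<Rightarrow> (nat \<times> nat) set" where
  "inversions xs = {(p, q). p < q \<and> q < length xs \<and> xs ! q < xs ! p}"

lemma mem_inversions_iff:
  "(p, q) \<in> inversions xs \<longleftrightarrow> p < q \<and> q < length xs \<and> xs ! q < xs ! p"
  by (simp add: inversions_def)

lemma finite_inversions: "finite (inversions xs)"
  by (rule finite_subset[of _ "{..<length xs} \<times> {..<length xs}"]) (auto simp: inversions_def)

lemma card_inversions_remove:
  "card (inversions xs) = card (inversions xs - {(p, q)}) + (if (p, q) \<in> inversions xs then 1 else 0)"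
  using card_Suc_Diff1[OF finite_inversions, of "(p, q)" xs] by auto

lemma nth_swap_first:
  "(b # a # ys) ! Transposition.transpose 0 1 p = (a # b # ys) ! p"
  by (cases p) (auto simp: Transposition.transpose_def nth_Cons split: nat.split)

lemma transpose_mem_inversions_swap_first:
  assumes "(p, q) \<in> inversions (a # b # ys) - {(0, 1)}"
  shows "(Transposition.transpose 0 1 p, Transposition.transpose 0 1 q)
    \<in> inversions (b # a # ys) - {(0, 1)}"
proof -
  let ?\<tau> = "Transposition.transpose 0 (1::nat)"
  have "?\<tau> p < ?\<tau> q" "?\<tau> q < length (b # a # ys)" "(?\<tau> p, ?\<tau> q) \<noteq> (0, 1)"
    using assms by (auto simp: mem_inversions_iff Transposition.transpose_def)
  moreover have "(b # a # ys) ! ?\<tau> q < (b # a # ys) ! ?\<tau> p"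
    using assms unfolding nth_swap_first Diff_iff mem_inversions_iff by blast
  ultimately show ?thesis
    unfolding Diff_iff mem_inversions_iff by blast
qed

lemma bij_betw_inversions_swap_first:
  "bij_betw (map_prod (Transposition.transpose 0 1) (Transposition.transpose 0 1))
     (inversions (a # b # ys) - {(0, 1)}) (inversions (b # a # ys) - {(0, 1)})"
proof (rule bij_betw_byWitness[where f' = "map_prod (Transposition.transpose 0 1) (Transposition.transpose 0 1)"])
  have swap: "map_prod (Transposition.transpose 0 1) (Transposition.transpose 0 1)
      ` (inversions (x # y # ys) - {(0, 1)}) \<subseteq> inversions (y # x # ys) - {(0, 1)}" for x y
    using transpose_mem_inversions_swap_first[of _ _ x y ys] by (force simp only: map_prod_simp)
  from swap[of a b] show "map_prod (Transposition.transpose 0 1) (Transposition.transpose 0 1)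
      ` (inversions (a # b # ys) - {(0, 1)}) \<subseteq> inversions (b # a # ys) - {(0, 1)}" .
  from swap[of b a] show "map_prod (Transposition.transpose 0 1) (Transposition.transpose 0 1)
      ` (inversions (b # a # ys) - {(0, 1)}) \<subseteq> inversions (a # b # ys) - {(0, 1)}" .
qed auto

lemma levi_civita_eq_sign_inversions:
  "distinct xs \<Longrightarrow> set xs = UNIV \<Longrightarrow> levi_civita xs = (-1) ^ card (inversions xs)"
  by (simp add: levi_civita_def inversions_def)

lemma levi_civita_swap_first:
  fixes a b :: "'a::{finite,linorder}"
  shows "levi_civita (b # a # ys) = - levi_civita (a # b # ys)"
proof (cases "distinct (a # b # ys) \<and> set (a # b # ys) = UNIV")
  case False
  then show ?thesis by (auto simp: levi_civita_def)
next
  case True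
  then have "a \<noteq> b" "distinct (b # a # ys)" "set (b # a # ys) = UNIV" by auto
  define c where "c = card (inversions (a # b # ys) - {(0, 1)})"
  have c': "c = card (inversions (b # a # ys) - {(0, 1)})"
    unfolding c_def using bij_betw_same_card[OF bij_betw_inversions_swap_first] .
  have inv_0_1: "(0, 1) \<in> inversions (a # b # ys) \<longleftrightarrow> b < a"
    "(0, 1) \<in> inversions (b # a # ys) \<longleftrightarrow> a < b"
    by (simp_all add: mem_inversions_iff)
  have "card (inversions (a # b # ys)) = c + (if b < a then 1 else 0)"
    unfolding c_def inv_0_1(1)[symmetric] by (rule card_inversions_remove)
  moreover have "card (inversions (b # a # ys)) = c + (if a < b then 1 else 0)"
    unfolding c' inv_0_1(2)[symmetric] by (rule card_inversions_remove)
  ultimately have "(-1 :: real) ^ card (inversions (b # a # ys)) = - ((-1) ^ card (inversions (a # b # ys)))"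
    using \<open>a \<noteq> b\<close> by (cases "a < b") auto
  with True \<open>distinct (b # a # ys)\<close> \<open>set (b # a # ys) = UNIV\<close> show ?thesis
    by (simp add: levi_civita_eq_sign_inversions)
qed

lemma double_sum_antisymmetric_eq_0:
  fixes G :: "'a \<Rightarrow> 'a \<Rightarrow> 'b::linordered_ab_group_add"
  assumes "\<And>i j. G j i = - G i j"
  shows "(\<Sum>i\<in>A. \<Sum>j\<in>A. G i j) = 0"
proof -
  have "(\<Sum>i\<in>A. \<Sum>j\<in>A. G i j) = (\<Sum>j\<in>A. \<Sum>i\<in>A. G i j)"
    by (rule sum.swap)
  also have "\<dots> = (\<Sum>j\<in>A. \<Sum>i\<in>A. - G j i)"
    by (intro sum.cong refl assms)
  also have "\<dots> = - (\<Sum>j\<in>A. \<Sum>i\<in>A. G j i)"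
    by (simp add: sum_negf)
  finally show ?thesis by simp
qed

theorem mainTheorem3:
  fixes \<rho> a1 a2 a3 :: "real^5 \<Rightarrow> real" and x :: "real^5"
  assumes "smooth \<rho>" "smooth a1" "smooth a2" "smooth a3"
  shows "(\<Sum>i1\<in>UNIV. \<Sum>i2\<in>UNIV. \<Sum>i3\<in>UNIV. \<Sum>i4\<in>UNIV. \<Sum>i5\<in>UNIV.
          \<Sum>j1\<in>UNIV. \<Sum>j2\<in>UNIV. \<Sum>j3\<in>UNIV. \<Sum>j4\<in>UNIV. \<Sum>j5\<in>UNIV.
            levi_civita [i1, i2, i3, i4, i5] * levi_civita [j1, j2, j3, j4, j5]
            * partial i1 \<rho> x * partial i2 \<rho> x
            * partial i3 (partial j1 a1) x * partial j2 a1 x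
            * partial i4 (partial j3 a2) x * partial j4 a2 x
            * partial i5 a3 x * partial j5 a3 x) = 0"
    (is "(\<Sum>i1\<in>UNIV. \<Sum>i2\<in>UNIV. ?G i1 i2) = 0")
proof (rule double_sum_antisymmetric_eq_0)
  fix i1 i2 :: 5
  show "?G i2 i1 = - ?G i1 i2"
    unfolding sum_negf[symmetric]
    \<comment> \<open>Instantiated: used unrestricted, the swap rule rewrites in both directions and loops.\<close>
    by (intro sum.cong refl)
       (simp add: levi_civita_swap_first[of i1 i2] mult_ac)
qed

end
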